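(* Let $\preceq$ be a binary relation on $L$. Then $\preceq$ is an E-relation if and only if $\preceq\, =\, \preceq_{\vec{\mathcal U}}$ for some $\vec{\mathcal U} \in \Upsilon$.
   Context: $L$ is a propositional language built from a finite set of propositional variables with the connectives $\neg,\wedge,\vee,\rightarrow,\top,\bot$; $W$ is the finite set of propositional worlds (truth assignments). For $\theta\in L$, $S_\theta=\{w\in W\mid w\models\theta\}$. For $E\cup\{\phi\}\subseteq L$, $E\models\phi$ means $\bigcap_{\theta\in E}S_\theta\subseteq S_\phi$; $\theta\models\phi$ means $\{\theta\}\models\phi$, and $\models\phi$ means $\emptyset\models\phi$. Sequences: consider finite sequences $\vec{\mathcal U}=(\mathcal U_0,\ldots,\mathcal U_k)$ ($k\ge 0$) of mutually disjoint subsets of $W$ (components may be empty, and $\emptyset$ may occur several times). For $\theta\in L$, $\mathrm{rank}^{\vec{\mathcal U}}(\theta)$ is the least $i$ with $\mathcal U_i\cap S_\theta\neq\emptyset$, and $\infty$ if there is no such $i$ (with $i<\infty$ for every integer $i$). Define $\theta\mid\!\sim_{\vec{\mathcal U}}\phi$ iff either $\mathrm{rank}^{\vec{\mathcal U}}(\theta)<\mathrm{rank}^{\vec{\mathcal U}}(\theta\wedge\neg\phi)$ or $\mathrm{rank}^{\vec{\mathcal U}}(\theta)=\infty$. $\vec{\mathcal U}$ is full iff $\bigcup_i\mathcal U_i=W$, and empty iff $\bigcup_i\mathcal U_i=\emptyset$; $\Upsilon$ is the set of all such sequences which are full or empty. For $\vec{\mathcal U}\in\Upsilon$ define $\preceq_{\vec{\mathcal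 U}}$ on $L$ by: $\theta\preceq_{\vec{\mathcal U}}\phi$ iff (it is not the case that $\neg\theta\vee\neg\phi\mid\!\sim_{\vec{\mathcal U}}\theta$) or $\neg\phi\mid\!\sim_{\vec{\mathcal U}}\bot$. An E-relation (epistemic entrenchment relation) is a relation $\preceq\subseteq L\times L$ such that for all $\theta,\phi,\psi\in L$: (E1) if $\theta\preceq\phi$ and $\phi\preceq\psi$ then $\theta\preceq\psi$; (E2) if $\theta\models\phi$ then $\theta\preceq\phi$; (E3) $\theta\preceq\theta\wedge\phi$ or $\phi\preceq\theta\wedge\phi$; (E4) if there exists $\psi\in L$ with $\bot\prec\psi$, then whenever $\theta\preceq\phi$ for all $\theta\in L$, we have $\models\phi$. Here $\prec$ is the strict part: $\theta\prec\phi$ iff $\theta\preceq\phi$ and not $\phi\preceq\theta$. *)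

theory Defs
  imports Main "HOL-Library.Extended_Nat"
begin

datatype 'v form =
    Var 'v
  | Neg "'v form"
  | Conj "'v form" "'v form"
  | Disj "'v form" "'v form"
  | Imp "'v form" "'v form"
  | Top
  | Bot

text \<open>Worlds are truth assignments 'v \<Rightarrow> bool; W is UNIV.\<close>
type_synonym 'v world = "'v \<Rightarrow> bool"

fun sat :: "'v world \<Rightarrow> 'v form \<Rightarrow> bool" where
  "sat w (Var p) = w p"
| "sat w (Neg a) = (\<not> sat w a)"
| "sat w (Conj a b) = (sat w a \<and> sat w b)"
| "sat w (Disj a b) = (sat w a \<or> sat w b)"
| "sat w (Imp a b) = (sat w a \<longrightarrow> sat w b)"
| "sat w Top = True"
| "sat w Bot = False"

definition S :: "'v form \<Rightarrow> 'v world set" where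
  "S \<theta> = {w. sat w \<theta>}"

definition entails :: "'v form \<Rightarrow> 'v form \<Rightarrow> bool" where
  "entails \<theta> \<phi> \<longleftrightarrow> S \<theta> \<subseteq> S \<phi>"

definition valid :: "'v form \<Rightarrow> bool" where
  "valid \<phi> \<longleftrightarrow> S \<phi> = UNIV"

definition is_seq :: "'v world set list \<Rightarrow> bool" where
  "is_seq U \<longleftrightarrow> U \<noteq> [] \<and> (\<forall>i<length U. \<forall>j<length U. i \<noteq> j \<longrightarrow> U!i \<inter> U!j = {})"

definition rank :: "'v world set list \<Rightarrow> 'v form \<Rightarrow> enat" where
  "rank U \<theta> = (if \<exists>i<length U. U!i \<inter> S \<theta> \<noteq> {}
                 then enat (LEAST i. i < length U \<and> U!i \<inter> S \<theta> \<noteq> {})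
                 else \<infinity>)"

definition nmon :: "'v world set list \<Rightarrow> 'v form \<Rightarrow> 'v form \<Rightarrow> bool" where
  "nmon U \<theta> \<phi> \<longleftrightarrow> rank U \<theta> < rank U (Conj \<theta> (Neg \<phi>)) \<or> rank U \<theta> = \<infinity>"

definition Upsilon :: "'v world set list set" where
  "Upsilon = {U. is_seq U \<and> (\<Union>(set U) = UNIV \<or> \<Union>(set U) = {})}"

definition entr_of :: "'v world set list \<Rightarrow> 'v form \<Rightarrow> 'v form \<Rightarrow> bool" where
  "entr_of U \<theta> \<phi> \<longleftrightarrow> \<not> nmon U (Disj (Neg \<theta>) (Neg \<phi>)) \<theta> \<or> nmon U (Neg \<phi>) Bot"

definition strict :: "('a \<Rightarrow> 'a \<Rightarrow> bool) \<Rightarrow> 'a \<Rightarrow> 'a \<Rightarrow> bool" where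
  "strict R x y \<longleftrightarrow> R x y \<and> \<not> R y x"

definition E_relation :: "('v form \<Rightarrow> 'v form \<Rightarrow> bool) \<Rightarrow> bool" where
  "E_relation R \<longleftrightarrow>
     (\<forall>\<theta> \<phi> \<psi>. R \<theta> \<phi> \<and> R \<phi> \<psi> \<longrightarrow> R \<theta> \<psi>) \<and>
     (\<forall>\<theta> \<phi>. entails \<theta> \<phi> \<longrightarrow> R \<theta> \<phi>) \<and>
     (\<forall>\<theta> \<phi>. R \<theta> (Conj \<theta> \<phi>) \<or> R \<phi> (Conj \<theta> \<phi>)) \<and>
     ((\<exists>\<psi>. strict R Bot \<psi>) \<longrightarrow> (\<forall>\<phi>. (\<forall>\<theta>. R \<theta> \<phi>) \<longrightarrow> valid \<phi>))"

end

theory Submission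
  imports Defs
begin

(* The relation entr_of U compares formulas by the first layer of U that meets their
   countermodels (infinity if none does), and this rank of a set of worlds turns unions into
   minima; that gives (E1)-(E3), and (E4) holds because a nontrivial relation forces U to be full.
   Conversely, by (E2) and (E3) an E-relation ranks a conjunction as the least of its conjuncts.
   Every formula is equivalent to the conjunction, over its countermodels w, of formulas whose only
   countermodel is w, so R is determined by a total preorder on worlds; layering the worlds by
   their position in that preorder gives the sequence. If Bot is R-maximal, R is the full
   relation, which is entr_of of the empty sequence [{}]. *)

lemma S_simps [simp]:
  "S (Neg a) = - S a" "S (Conj a b) = S a \<inter> S b" "S (Disj a b) = S a \<union> S b"
  "S Top = UNIV" "S Bot = {}"
  by (auto simp: S_def)

lemma INF_enat_eq_infinity_iff: "(INF x \<in> A. enat (f x)) = \<infinity> \<longleftrightarrow> A = {}"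
  using INF_top_conv[of enat "f ` A"] by (auto simp: top_enat_def image_comp)

lemma INF_enat_le_INF_enat_iff:
  fixes f :: "'a \<Rightarrow> nat"
  shows "(INF a \<in> A. enat (f a)) \<le> (INF b \<in> B. enat (f b)) \<longleftrightarrow> (\<exists>a\<in>A. \<forall>b\<in>B. f a \<le> f b) \<or> B = {}"
proof (cases "A = {}")
  case True
  then show ?thesis
    using INF_enat_eq_infinity_iff[of f B] by (simp add: top_enat_def)
next
  case False
  then obtain a0 where a0: "a0 \<in> A" "\<And>a. a \<in> A \<Longrightarrow> f a0 \<le> f a"
    using ex_has_least_nat[of "\<lambda>a. a \<in> A" _ f] by blast
  have "(INF a \<in> A. enat (f a)) = enat (f a0)"
    using a0 by (intro antisym INF_lower INF_greatest) auto
  then show ?thesis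
    using a0 by (auto simp: le_INF_iff intro: order_trans)
qed

definition set_rank :: "'a set list \<Rightarrow> 'a set \<Rightarrow> enat" where
  "set_rank U X = (INF i \<in> {i. i < length U \<and> U ! i \<inter> X \<noteq> {}}. enat i)"

lemma rank_eq_set_rank: "rank U \<theta> = set_rank U (S \<theta>)"
proof (cases "\<exists>i<length U. U ! i \<inter> S \<theta> \<noteq> {}")
  case True
  let ?P = "\<lambda>i. i < length U \<and> U ! i \<inter> S \<theta> \<noteq> {}"
  have "(INF i \<in> Collect ?P. enat i) = enat (Least ?P)"
  proof (rule antisym)
    have "?P (Least ?P)"
      using True by (rule LeastI_ex)
    then show "(INF i \<in> Collect ?P. enat i) \<le> enat (Least ?P)"
      by (simp add: INF_lower)
    show "enat (Least ?P) \<le> (INF i \<in> Collect ?P. enat i)"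
      by (rule INF_greatest) (simp add: Least_le)
  qed
  then show ?thesis
    using True by (simp add: rank_def set_rank_def)
next
  case False
  then have "set_rank U (S \<theta>) = \<infinity>"
    unfolding set_rank_def INF_enat_eq_infinity_iff by auto
  then show ?thesis
    using False by (simp add: rank_def)
qed

lemma set_rank_Un: "set_rank U (A \<union> B) = min (set_rank U A) (set_rank U B)"
proof -
  have "{i. i < length U \<and> U ! i \<inter> (A \<union> B) \<noteq> {}}
      = {i. i < length U \<and> U ! i \<inter> A \<noteq> {}} \<union> {i. i < length U \<and> U ! i \<inter> B \<noteq> {}}"
    by auto
  then show ?thesis
    by (simp add: set_rank_def INF_union inf_min)
qed

lemma set_rank_antimono: "A \<subseteq> B \<Longrightarrow> set_rank U B \<le> set_rank U A"
  unfolding set_rank_def by (rule INF_superset_mono) auto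

lemma set_rank_eq_infinity_iff: "set_rank U X = \<infinity> \<longleftrightarrow> X \<inter> \<Union>(set U) = {}"
proof -
  have "set_rank U X = \<infinity> \<longleftrightarrow> (\<forall>i<length U. U ! i \<inter> X = {})"
    unfolding set_rank_def INF_enat_eq_infinity_iff by auto
  also have "\<dots> \<longleftrightarrow> X \<inter> \<Union>(set U) = {}"
    by (fastforce simp: in_set_conv_nth)
  finally show ?thesis .
qed

lemma set_rank_empty [simp]: "set_rank U {} = \<infinity>"
  by (simp add: set_rank_eq_infinity_iff)

lemma entr_of_iff_set_rank: "entr_of U \<theta> \<phi> \<longleftrightarrow> set_rank U (- S \<theta>) \<le> set_rank U (- S \<phi>)"
proof -
  have "(- S \<theta> \<union> - S \<phi>) \<inter> - S \<theta> = - S \<theta>"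
    by auto
  then show ?thesis
    unfolding entr_of_def nmon_def rank_eq_set_rank S_simps set_rank_Un
    by (cases "set_rank U (- S \<theta>)"; cases "set_rank U (- S \<phi>)") (auto simp: min_def)
qed

lemma E_relation_entr_of:
  assumes "U \<in> Upsilon"
  shows "E_relation (entr_of U)"
proof -
  have le_iff: "entr_of U a b \<longleftrightarrow> set_rank U (- S a) \<le> set_rank U (- S b)" for a b
    by (fact entr_of_iff_set_rank)
  have E4: "valid \<phi>"
    if "\<exists>\<psi>. strict (entr_of U) Bot \<psi>" and top: "\<forall>\<theta>. entr_of U \<theta> \<phi>" for \<phi>
  proof -
    from that(1) obtain \<psi> where "strict (entr_of U) Bot \<psi>" ..
    then have "set_rank U UNIV < set_rank U (- S \<psi>)"
      unfolding strict_def le_iff by auto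
    then have "set_rank U UNIV \<noteq> \<infinity>"
      by (metis enat_ord_simps(6))
    then have "\<Union>(set U) = UNIV"
      using assms unfolding Upsilon_def set_rank_eq_infinity_iff by auto
    moreover have "set_rank U (- S \<phi>) = \<infinity>"
      using top[rule_format, of Top] unfolding le_iff by simp
    ultimately show "valid \<phi>"
      unfolding valid_def set_rank_eq_infinity_iff by auto
  qed
  show ?thesis
    unfolding E_relation_def
  proof (intro conjI allI impI)
    fix a b c :: "'a form"
    show "entr_of U a c" if "entr_of U a b \<and> entr_of U b c"
      using that unfolding le_iff by (meson order_trans)
    show "entr_of U a b" if "entails a b"
      using that unfolding le_iff entails_def by (simp add: set_rank_antimono)
    have "- S (Conj a b) = - S a \<union> - S b"
      by auto
    then show "entr_of U a (Conj a b) \<or> entr_of U b (Conj a b)"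
      unfolding le_iff by (simp add: set_rank_Un min_def)
  qed (fact E4)
qed

definition layers :: "('a \<Rightarrow> nat) \<Rightarrow> nat \<Rightarrow> 'a set list" where
  "layers r n = map (\<lambda>i. {x. r x = i}) [0..<n]"

lemma set_rank_layers:
  assumes "\<And>x. r x < n"
  shows "set_rank (layers r n) X = (INF x \<in> X. enat (r x))"
proof -
  have "{i. i < length (layers r n) \<and> layers r n ! i \<inter> X \<noteq> {}} = r ` X"
    using assms by (auto simp: layers_def)
  then show ?thesis
    by (simp add: set_rank_def image_comp)
qed

lemma layers_in_Upsilon:
  assumes "\<And>w. r w < n"
  shows "layers r n \<in> Upsilon"
proof -
  have "\<Union>(set (layers r n)) = UNIV"
    using assms by (auto simp: layers_def)
  moreover have "layers r n \<noteq> []"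
    using assms[of undefined] by (simp add: layers_def)
  ultimately show ?thesis
    by (auto simp: Upsilon_def is_seq_def layers_def)
qed

lemma finite_total_preorder_ranking:
  fixes le :: "'a::finite \<Rightarrow> 'a \<Rightarrow> bool"
  assumes trans: "\<And>x y z. le x y \<Longrightarrow> le y z \<Longrightarrow> le x z"
    and total: "\<And>x y. le x y \<or> le y x"
  obtains r :: "'a \<Rightarrow> nat" where "\<And>x y. r x \<le> r y \<longleftrightarrow> le x y" and "\<And>x. r x < card (UNIV :: 'a set)"
proof
  define below where "below x = {y. le y x \<and> \<not> le x y}" for x
  show "card (below x) < card (UNIV :: 'a set)" for x
    by (rule psubset_card_mono) (auto simp: below_def)
  show "card (below x) \<le> card (below y) \<longleftrightarrow> le x y" for x y
  proof
    assume "le x y"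
    then have "below x \<subseteq> below y"
      unfolding below_def using trans by blast
    then show "card (below x) \<le> card (below y)"
      by (simp add: card_mono)
  next
    assume "card (below x) \<le> card (below y)"
    show "le x y"
    proof (rule ccontr)
      assume "\<not> le x y"
      then have "below y \<subset> below x"
        unfolding below_def using trans total by blast
      then have "card (below y) < card (below x)"
        by (simp add: psubset_card_mono)
      with \<open>card (below x) \<le> card (below y)\<close> show False
        by simp
    qed
  qed
qed

definition Conjs :: "'v form list \<Rightarrow> 'v form" where
  "Conjs xs = foldr Conj xs Top"

lemma S_Conjs: "S (Conjs xs) = (\<Inter>\<theta> \<in> set xs. S \<theta>)"
  by (induction xs) (simp_all add: Conjs_def)

lemma ex_form_S_eq_Compl_singleton: "\<exists>\<theta>. S \<theta> = - {w :: 'v::finite world}"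
proof -
  obtain ps :: "'v list" where ps: "set ps = UNIV"
    using finite_list[OF finite_UNIV] by blast
  let ?literal = "\<lambda>p. if w p then Var p else Neg (Var p)"
  have literal: "S (?literal p) = {v. v p = w p}" for p
    by (cases "w p") (auto simp: S_def)
  have "S (Conjs (map ?literal ps)) = (\<Inter>p. S (?literal p))"
    unfolding S_Conjs set_map ps image_image ..
  also have "\<dots> = (\<Inter>p. {v. v p = w p})"
    by (simp only: literal)
  also have "\<dots> = {w}"
    by (auto simp: fun_eq_iff)
  finally have "S (Neg (Conjs (map ?literal ps))) = - {w}"
    by simp
  then show ?thesis ..
qed

definition form_omitting :: "'v::finite world \<Rightarrow> 'v form" where
  "form_omitting w = (SOME \<theta>. S \<theta> = - {w})"

lemma S_form_omitting [simp]: "S (form_omitting w) = - {w}"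
  unfolding form_omitting_def by (rule someI_ex[OF ex_form_S_eq_Compl_singleton])

lemma ex_Conjs_form_omitting:
  fixes \<theta> :: "'v::finite form"
  obtains ws where "set ws = - S \<theta>" and "S (Conjs (map form_omitting ws)) = S \<theta>"
proof -
  obtain ws where ws: "set ws = - S \<theta>"
    using finite_list[of "- S \<theta>"] by auto
  moreover have "S (Conjs (map form_omitting ws)) = S \<theta>"
    using ws by (auto simp: S_Conjs)
  ultimately show ?thesis
    by (rule that)
qed

locale entrenchment =
  fixes R :: "'v::finite form \<Rightarrow> 'v form \<Rightarrow> bool"
  assumes E_relation: "E_relation R"
begin

lemma trans: "R a b \<Longrightarrow> R b c \<Longrightarrow> R a c"
  using E_relation unfolding E_relation_def by blast

lemma mono: "S a \<subseteq> S b \<Longrightarrow> R a b"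
  using E_relation unfolding E_relation_def entails_def by blast

lemma Conj_le_either: "R a (Conj a b) \<or> R b (Conj a b)"
  using E_relation unfolding E_relation_def by blast

lemma valid_if_greatest:
  "\<exists>\<psi>. strict R Bot \<psi> \<Longrightarrow> (\<And>\<theta>. R \<theta> \<phi>) \<Longrightarrow> valid \<phi>"
  using E_relation unfolding E_relation_def by blast

lemma total: "R a b \<or> R b a"
  using Conj_le_either[of a b] mono[of "Conj a b" a] mono[of "Conj a b" b] trans by auto

lemma cong: "S a = S a' \<Longrightarrow> S b = S b' \<Longrightarrow> R a b \<longleftrightarrow> R a' b'"
  by (metis mono trans order_refl)

lemma Conj_le_iff: "R (Conj a b) c \<longleftrightarrow> R a c \<or> R b c"
  using Conj_le_either[of a b] mono[of "Conj a b" a] mono[of "Conj a b" b] trans by auto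

lemma le_Conj_iff: "R c (Conj a b) \<longleftrightarrow> R c a \<and> R c b"
  using Conj_le_either[of a b] mono[of "Conj a b" a] mono[of "Conj a b" b] trans by auto

lemma Conjs_le_iff: "R (Conjs xs) c \<longleftrightarrow> (\<exists>x \<in> set xs. R x c) \<or> R Top c"
  by (induction xs) (auto simp: Conjs_def Conj_le_iff)

lemma le_Conjs_iff: "R c (Conjs xs) \<longleftrightarrow> (\<forall>x \<in> set xs. R c x)"
  by (induction xs) (auto simp: Conjs_def le_Conj_iff intro: mono)

lemma le_iff_ex_form_omitting_le: "R \<theta> \<phi> \<longleftrightarrow> (\<exists>w \<in> - S \<theta>. R (form_omitting w) \<phi>) \<or> R Top \<phi>"
proof -
  obtain ws where "set ws = - S \<theta>" and "S (Conjs (map form_omitting ws)) = S \<theta>"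
    by (rule ex_Conjs_form_omitting)
  then show ?thesis
    using cong[of "Conjs (map form_omitting ws)" \<theta> \<phi> \<phi>] by (simp add: Conjs_le_iff)
qed

lemma le_iff_all_le_form_omitting: "R \<theta> \<phi> \<longleftrightarrow> (\<forall>w \<in> - S \<phi>. R \<theta> (form_omitting w))"
proof -
  obtain ws where "set ws = - S \<phi>" and "S (Conjs (map form_omitting ws)) = S \<phi>"
    by (rule ex_Conjs_form_omitting)
  then show ?thesis
    using cong[of \<theta> \<theta> "Conjs (map form_omitting ws)" \<phi>] by (simp add: le_Conjs_iff)
qed

lemma Top_le_iff:
  assumes "\<exists>\<psi>. strict R Bot \<psi>"
  shows "R Top \<phi> \<longleftrightarrow> S \<phi> = UNIV"
proof
  assume "R Top \<phi>"
  then have "R \<theta> \<phi>" for \<theta>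
    using mono[of \<theta> Top] trans by auto
  then show "S \<phi> = UNIV"
    using valid_if_greatest[OF assms] unfolding valid_def by blast
qed (simp add: mono)

lemma le_iff_form_omitting_le_form_omitting:
  assumes "\<exists>\<psi>. strict R Bot \<psi>"
  shows "R \<theta> \<phi> \<longleftrightarrow>
    (\<exists>w \<in> - S \<theta>. \<forall>w' \<in> - S \<phi>. R (form_omitting w) (form_omitting w')) \<or> - S \<phi> = {}"
proof -
  have "R (form_omitting w) \<phi> \<longleftrightarrow> (\<forall>w' \<in> - S \<phi>. R (form_omitting w) (form_omitting w'))" for w
    by (rule le_iff_all_le_form_omitting)
  moreover have "R Top \<phi> \<longleftrightarrow> - S \<phi> = {}"
    using Top_le_iff[OF assms] by auto
  ultimately show ?thesis
    using le_iff_ex_form_omitting_le[of \<theta> \<phi>] by simp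
qed

lemma le_if_degenerate:
  assumes "\<not> (\<exists>\<psi>. strict R Bot \<psi>)"
  shows "R a b"
proof -
  have "R Bot a" "R Bot b"
    by (simp_all add: mono)
  with assms have "R a Bot"
    unfolding strict_def by blast
  then show ?thesis
    using \<open>R Bot b\<close> by (rule trans)
qed

lemma ex_Upsilon_eq_entr_of: "\<exists>U \<in> Upsilon. R = entr_of U"
proof (cases "\<exists>\<psi>. strict R Bot \<psi>")
  case True
  obtain r :: "'v world \<Rightarrow> nat"
    where r_le_iff: "\<And>w w'. r w \<le> r w' \<longleftrightarrow> R (form_omitting w) (form_omitting w')"
      and r_less: "\<And>w. r w < card (UNIV :: 'v world set)"
    using finite_total_preorder_ranking[of "\<lambda>w w'. R (form_omitting w) (form_omitting w')"]
      trans total by blast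
  define U where "U = layers r (card (UNIV :: 'v world set))"
  have "R \<theta> \<phi> \<longleftrightarrow> entr_of U \<theta> \<phi>" for \<theta> \<phi>
  proof -
    have "R \<theta> \<phi> \<longleftrightarrow> (\<exists>w \<in> - S \<theta>. \<forall>w' \<in> - S \<phi>. r w \<le> r w') \<or> - S \<phi> = {}"
      unfolding r_le_iff by (rule le_iff_form_omitting_le_form_omitting[OF True])
    also have "\<dots> \<longleftrightarrow> (INF w \<in> - S \<theta>. enat (r w)) \<le> (INF w \<in> - S \<phi>. enat (r w))"
      by (rule INF_enat_le_INF_enat_iff[symmetric])
    also have "\<dots> \<longleftrightarrow> entr_of U \<theta> \<phi>"
      unfolding entr_of_iff_set_rank U_def set_rank_layers[OF r_less] ..
    finally show ?thesis .
  qed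
  moreover have "U \<in> Upsilon"
    unfolding U_def using r_less by (rule layers_in_Upsilon)
  ultimately show ?thesis
    by blast
next
  case False
  have "set_rank [{}] X = \<infinity>" for X :: "'v world set"
    by (simp add: set_rank_eq_infinity_iff)
  then have "R \<theta> \<phi> \<longleftrightarrow> entr_of [{}] \<theta> \<phi>" for \<theta> \<phi>
    using le_if_degenerate[OF False] by (simp add: entr_of_iff_set_rank)
  moreover have "[{}] \<in> Upsilon"
    by (simp add: Upsilon_def is_seq_def)
  ultimately show ?thesis
    by blast
qed

end

theorem proposition3:
  fixes R :: "('v::finite) form \<Rightarrow> 'v form \<Rightarrow> bool"
  shows "E_relation R \<longleftrightarrow> (\<exists>U\<in>Upsilon. R = entr_of U)"
proof
  assume "E_relation R"
  then interpret entrenchment R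
    by (rule entrenchment.intro)
  show "\<exists>U\<in>Upsilon. R = entr_of U"
    by (rule ex_Upsilon_eq_entr_of)
next
  assume "\<exists>U\<in>Upsilon. R = entr_of U"
  then show "E_relation R"
    using E_relation_entr_of by blast
qed

end
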